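(* Assume the general coarsening setting described in the context and let $r$ be a deterministic path with $P(R=r)>0$. If CAR(GCMP)-loc holds on $r$, i.e. $$\mathcal{L}^{(\theta,\psi)/(\theta_0,\psi_0)}_{\mathcal{R}|\mathcal{X}}=\mathcal{L}^{(\theta,\psi)/(\theta_0,\psi_0)}_{\mathcal{R}|\mathcal{X}^r}\quad\text{a.s. on }\{R=r\}\ \text{for all }(\theta,\psi),$$ then the mechanism leading to incomplete data is ignorable on $r$: for all $\theta$ and whatever $\psi_0$, $\mathcal{L}^{(\theta,\psi_0)/(\theta_0,\psi_0)}_{\mathcal{O}}=\mathcal{L}^{\theta/\theta_0}_{\mathcal{X}^r}$ a.s. on $\{R=r\}$.
   Context: Setting. On a measurable space $(\Omega,\mathcal{F})$ live two càdlàg stochastic processes: $X=(X_t)_{t\ge0}$ with values in $\mathbb{R}^d$ (path space a Skorohod space) and a response indicator process $R=(R_t)_{t\ge0}$ with values in $\{0,1\}$, $R_t=1$ meaning $X_t$ is observed. Let $\mathcal{X}=\sigma(X_t,t\ge0)$, $\mathcal{R}=\sigma(R_t,t\ge0)$, $\mathcal{F}=\mathcal{X}\vee\mathcal{R}$. A model is a family $\{P_{(\theta,\psi)}:(\theta,\psi)\in\Theta\times\Psi\}$ of mutually equivalent probability measures on $\mathcal{F}$ with reference measure $P_{(\theta_0,\psi_0)}$; the restriction of $P_{(\theta,\psi)}$ to $\mathcal{X}$ depends only on $\theta$ (denoted $P_\theta$). Non-informativeness: $P_{(\theta_1,\psi)}(A\mid\mathcal{X})=P_{(\theta_2,\psi)}(A\mid\mathcal{X})$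 a.s. for all $A\in\mathcal{R}$. For a sub-$\sigma$-field $\mathcal{G}$, $\mathcal{L}^{(\theta,\psi)/(\theta_0,\psi_0)}_{\mathcal{G}}$ is the Radon–Nikodym derivative $dP_{(\theta,\psi)}/dP_{(\theta_0,\psi_0)}$ restricted to $\mathcal{G}$; for $\mathcal{G}\subset\mathcal{X}$ it is written $\mathcal{L}^{\theta/\theta_0}_{\mathcal{G}}$. The conditional likelihood ratio is $\mathcal{L}_{\mathcal{Y}|\mathcal{G}}=\mathcal{L}_{\mathcal{G}\vee\mathcal{Y}}/\mathcal{L}_{\mathcal{G}}$. The observed $\sigma$-field is $\mathcal{O}=\sigma(R_tX_t,R_t,\ t\ge0)$. For a deterministic path $r$, $\{R=r\}=\{R_t=r_t\ \forall t\}$ and $\mathcal{X}^r=\sigma(r_tX_t,\ t\ge0)$. *)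

theory Defs
  imports "HOL-Probability.Probability"
begin

definition cadlag :: "(real \<Rightarrow> 'b::topological_space) \<Rightarrow> bool" where
  "cadlag f \<longleftrightarrow> (\<forall>t\<ge>0. (f \<longlongrightarrow> f t) (at_right t)) \<and>
                 (\<forall>t>0. \<exists>l. (f \<longlongrightarrow> l) (at_left t))"

definition gen_sigma :: "'a set \<Rightarrow> ('i \<Rightarrow> 'a \<Rightarrow> 'b::topological_space) \<Rightarrow> 'i set \<Rightarrow> 'a measure" where
  "gen_sigma \<Omega> f I = sigma \<Omega> {f i -` B \<inter> \<Omega> | i B. i \<in> I \<and> B \<in> sets borel}"

definition join_sigma :: "'a set \<Rightarrow> 'a measure \<Rightarrow> 'a measure \<Rightarrow> 'a measure" where
  "join_sigma \<Omega> G H = sigma \<Omega> (sets G \<union> sets H)"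

definition LR :: "'a measure \<Rightarrow> 'a measure \<Rightarrow> 'a measure \<Rightarrow> 'a \<Rightarrow> real" where
  "LR Q Q0 G = (\<lambda>\<omega>. enn2real (RN_deriv (restr_to_subalg Q0 G) (restr_to_subalg Q G) \<omega>))"

definition condLR :: "'a set \<Rightarrow> 'a measure \<Rightarrow> 'a measure \<Rightarrow> 'a measure \<Rightarrow> 'a measure \<Rightarrow> 'a \<Rightarrow> real" where
  "condLR \<Omega> Q Q0 Y G = (\<lambda>\<omega>. LR Q Q0 (join_sigma \<Omega> G Y) \<omega> / LR Q Q0 G \<omega>)"

definition path_event :: "'a set \<Rightarrow> (real \<Rightarrow> 'a \<Rightarrow> real) \<Rightarrow> (real \<Rightarrow> real) \<Rightarrow> 'a set" where
  "path_event \<Omega> R r = {\<omega> \<in> \<Omega>. \<forall>t\<ge>0. R t \<omega> = r t}"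

end

theory Submission
  imports Defs
begin

(* On {R = r} the observed sigma-field O = sigma(R_t X_t, R_t) and X^r v R have the same trace,
   so their likelihood ratios agree there. Non-informativeness makes the likelihood ratio of
   (theta, psi) against (theta0, psi) on X v R equal to the one on X. By the chain rule through the
   reference measure, the conditional likelihood ratio of R given X (resp. X^r) between the two
   models is a quotient of conditional likelihood ratios against the reference; CAR equates the two
   quotients on {R = r}, hence the likelihood ratio on X^r v R equals the one on X^r there. *)

lemma space_gen_sigma [simp]: "space (gen_sigma \<Omega> f I) = \<Omega>"
  unfolding gen_sigma_def by (rule space_measure_of) auto

lemma sets_gen_sigma:
  "sets (gen_sigma \<Omega> f I) = sigma_sets \<Omega> {f i -` B \<inter> \<Omega> | i B. i \<in> I \<and> B \<in> sets borel}"
  unfolding gen_sigma_def by (rule sets_measure_of) auto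

lemma measurable_gen_sigma:
  fixes f :: "'i \<Rightarrow> 'a \<Rightarrow> 'b::topological_space"
  assumes "i \<in> I"
  shows "f i \<in> borel_measurable (gen_sigma \<Omega> f I)"
proof (rule measurableI)
  fix B :: "'b set" assume "B \<in> sets borel"
  with assms show "f i -` B \<inter> space (gen_sigma \<Omega> f I) \<in> sets (gen_sigma \<Omega> f I)"
    unfolding sets_gen_sigma space_gen_sigma by (intro sigma_sets.Basic) blast
qed simp

lemma subalgebra_gen_sigma:
  fixes f :: "'i \<Rightarrow> 'a \<Rightarrow> 'b::topological_space"
  assumes \<Omega>: "space M = \<Omega>" and f: "\<And>i. i \<in> I \<Longrightarrow> f i \<in> borel_measurable M"
  shows "subalgebra M (gen_sigma \<Omega> f I)"
proof -
  let ?S = "{f i -` B \<inter> \<Omega> | i B. i \<in> I \<and> B \<in> sets borel}"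
  have "?S \<subseteq> sets M"
    using measurable_sets[OF f] \<Omega> by blast
  then have "sigma_sets (space M) ?S \<subseteq> sets M"
    by (rule sets.sigma_sets_subset)
  then show ?thesis
    using \<Omega> by (simp add: subalgebra_def sets_gen_sigma)
qed

lemma space_join_sigma [simp]:
  assumes "space G = \<Omega>" and "space H = \<Omega>"
  shows "space (join_sigma \<Omega> G H) = \<Omega>"
  unfolding join_sigma_def using assms sets.space_closed[of G] sets.space_closed[of H]
  by (intro space_measure_of) auto

lemma sets_join_sigma:
  assumes "space G = \<Omega>" and "space H = \<Omega>"
  shows "sets (join_sigma \<Omega> G H) = sigma_sets \<Omega> (sets G \<union> sets H)"
  unfolding join_sigma_def using assms sets.space_closed[of G] sets.space_closed[of H]
  by (intro sets_measure_of) auto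

lemma subalgebra_join_sigma:
  assumes "subalgebra M G" and "subalgebra M H"
  shows "subalgebra M (join_sigma (space M) G H)"
  using assms unfolding subalgebra_def
  by (auto simp: sets_join_sigma intro!: sets.sigma_sets_subset)

lemma sets_join_sigma_upper:
  assumes "space G = \<Omega>" and "space H = \<Omega>"
  shows "sets G \<subseteq> sets (join_sigma \<Omega> G H)" "sets H \<subseteq> sets (join_sigma \<Omega> G H)"
  unfolding sets_join_sigma[OF assms] by (auto intro: sigma_sets.Basic)

lemma sets_join_sigma_Int_generator:
  assumes G: "space G = \<Omega>" and H: "space H = \<Omega>"
  shows "sets (join_sigma \<Omega> G H) = sigma_sets \<Omega> {a \<inter> b | a b. a \<in> sets G \<and> b \<in> sets H}"
  unfolding sets_join_sigma[OF assms]
proof (rule sigma_sets_eqI)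
  fix a assume "a \<in> sets G \<union> sets H"
  then show "a \<in> sigma_sets \<Omega> {a \<inter> b | a b. a \<in> sets G \<and> b \<in> sets H}"
  proof
    assume a: "a \<in> sets G"
    have "a \<inter> \<Omega> = a" using sets.sets_into_space[OF a] G by auto
    then show ?thesis using a sets.top[of H] H
      by (intro sigma_sets.Basic CollectI exI[of _ a] exI[of _ \<Omega>]) simp
  next
    assume b: "a \<in> sets H"
    have "\<Omega> \<inter> a = a" using sets.sets_into_space[OF b] H by auto
    then show ?thesis using b sets.top[of G] G
      by (intro sigma_sets.Basic CollectI exI[of _ \<Omega>] exI[of _ a]) simp
  qed
next
  interpret sigma_algebra \<Omega> "sigma_sets \<Omega> (sets G \<union> sets H)"
    by (rule sigma_algebra_sigma_sets) (use G H sets.space_closed[of G] sets.space_closed[of H] in auto)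
  fix c assume "c \<in> {a \<inter> b | a b. a \<in> sets G \<and> b \<in> sets H}"
  then obtain a b where c: "c = a \<inter> b" and "a \<in> sets G" "b \<in> sets H" by blast
  then have "a \<in> sigma_sets \<Omega> (sets G \<union> sets H)" "b \<in> sigma_sets \<Omega> (sets G \<union> sets H)"
    by (auto intro: sigma_sets.Basic)
  then show "c \<in> sigma_sets \<Omega> (sets G \<union> sets H)"
    unfolding c by (rule Int)
qed

lemma Int_stable_Int_generator:
  "Int_stable {a \<inter> b | a b. a \<in> sets G \<and> b \<in> sets H}"
proof (rule Int_stableI)
  fix c c' assume "c \<in> {a \<inter> b | a b. a \<in> sets G \<and> b \<in> sets H}" "c' \<in> {a \<inter> b | a b. a \<in> sets G \<and> b \<in> sets H}"
  then obtain a b a' b' where "c = a \<inter> b" "c' = a' \<inter> b'" "a \<in> sets G" "a' \<in> sets G" "b \<in> sets H" "b' \<in> sets H"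
    by blast
  then show "c \<inter> c' \<in> {a \<inter> b | a b. a \<in> sets G \<and> b \<in> sets H}"
    by (intro CollectI exI[of _ "a \<inter> a'"] exI[of _ "b \<inter> b'"]) auto
qed

lemma emeasure_join_sigma_eqI:
  assumes N: "finite_measure N" and G: "subalgebra N G" and H: "subalgebra N H"
    and sets_K: "sets K = sets N"
    and eq: "\<And>c a. c \<in> sets G \<Longrightarrow> a \<in> sets H \<Longrightarrow> emeasure N (c \<inter> a) = emeasure K (c \<inter> a)"
    and A: "A \<in> sets (join_sigma (space N) G H)"
  shows "emeasure N A = emeasure K A"
proof -
  let ?F = "join_sigma (space N) G H" and ?E = "{c \<inter> a | c a. c \<in> sets G \<and> a \<in> sets H}"
  have F: "subalgebra N ?F" and FK: "subalgebra K ?F"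
    using subalgebra_join_sigma[OF G H] sets_K sets_eq_imp_space_eq[OF sets_K] by (auto simp: subalgebra_def)
  have sp: "space G = space N" "space H = space N"
    using G H by (auto simp: subalgebra_def)
  have sets_F: "sets ?F = sigma_sets (space N) ?E"
    by (rule sets_join_sigma_Int_generator[OF sp])
  have "restr_to_subalg N ?F = restr_to_subalg K ?F"
  proof (rule measure_eqI_generator_eq[OF Int_stable_Int_generator, where \<Omega>="space N" and A="\<lambda>_. space N"])
    show "?E \<subseteq> Pow (space N)"
      using sets.sets_into_space sp by fastforce
    show "sets (restr_to_subalg N ?F) = sigma_sets (space N) ?E"
      "sets (restr_to_subalg K ?F) = sigma_sets (space N) ?E"
      using sets_F sets_restr_to_subalg[OF F] sets_restr_to_subalg[OF FK] by simp_all
    show "range (\<lambda>_. space N) \<subseteq> ?E"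
      using sets.top[of G] sets.top[of H] sp by force
    have "space N \<in> sets ?F"
      using sets.top[of ?F] by (simp add: sp)
    then show "(\<Union>i. space N) = space N" "emeasure (restr_to_subalg N ?F) (space N) \<noteq> \<infinity>" for i
      by (simp_all add: emeasure_restr_to_subalg[OF F] finite_measure.emeasure_finite[OF N])
    fix X assume "X \<in> ?E"
    then obtain c a where X: "X = c \<inter> a" and c: "c \<in> sets G" and a: "a \<in> sets H"
      by blast
    then have X_F: "X \<in> sets ?F"
      using sets_F by (auto intro: sigma_sets.Basic)
    have "emeasure N X = emeasure K X"
      unfolding X by (rule eq[OF c a])
    then show "emeasure (restr_to_subalg N ?F) X = emeasure (restr_to_subalg K ?F) X"
      unfolding emeasure_restr_to_subalg[OF F X_F] emeasure_restr_to_subalg[OF FK X_F] .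
  qed
  then have "emeasure (restr_to_subalg N ?F) A = emeasure (restr_to_subalg K ?F) A"
    by (rule arg_cong)
  then show ?thesis
    unfolding emeasure_restr_to_subalg[OF F A] emeasure_restr_to_subalg[OF FK A] .
qed

lemma trace_sigma_sets_subset:
  assumes "(\<inter>) E ` S \<subseteq> (\<inter>) E ` S'"
  shows "(\<inter>) E ` sigma_sets \<Omega> S \<subseteq> (\<inter>) E ` sigma_sets \<Omega> S'"
proof -
  have "\<exists>b\<in>sigma_sets \<Omega> S'. E \<inter> a = E \<inter> b" if "a \<in> sigma_sets \<Omega> S" for a
    using that
  proof induction
    case (Basic a)
    then obtain b where "b \<in> S'" "E \<inter> a = E \<inter> b" using assms by blast
    then show ?case by (intro bexI[of _ b] sigma_sets.Basic)
  next
    case Empty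
    show ?case by (intro bexI[of _ "{}"] sigma_sets.Empty) simp
  next
    case (Compl a)
    then obtain b where "b \<in> sigma_sets \<Omega> S'" "E \<inter> a = E \<inter> b" by blast
    then show ?case by (intro bexI[of _ "\<Omega> - b"] sigma_sets.Compl) auto
  next
    case (Union a)
    then obtain b where "\<And>i. b i \<in> sigma_sets \<Omega> S'" "\<And>i. E \<inter> a i = E \<inter> b i" by metis
    then show ?case by (intro bexI[of _ "\<Union>i. b i"] sigma_sets.Union) auto
  qed
  then show ?thesis by blast
qed

lemma trace_sigma_sets_eq:
  assumes "(\<inter>) E ` S = (\<inter>) E ` S'"
  shows "(\<inter>) E ` sigma_sets \<Omega> S = (\<inter>) E ` sigma_sets \<Omega> S'"
  using trace_sigma_sets_subset[of E S S' \<Omega>] trace_sigma_sets_subset[of E S' S \<Omega>] assms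
  by (intro equalityI) simp_all

lemma restrict_space_gen_sigma_cong:
  fixes f g :: "'i \<Rightarrow> 'a \<Rightarrow> 'b::topological_space"
  assumes "\<And>i \<omega>. i \<in> I \<Longrightarrow> \<omega> \<in> E \<Longrightarrow> f i \<omega> = g i \<omega>"
  shows "sets (restrict_space (gen_sigma \<Omega> f I) E) = sets (restrict_space (gen_sigma \<Omega> g I) E)"
proof -
  have generators: "{h i -` B \<inter> \<Omega> | i B. i \<in> I \<and> B \<in> sets borel} = (\<lambda>(i, B). h i -` B \<inter> \<Omega>) ` (I \<times> sets borel)"
    for h :: "'i \<Rightarrow> 'a \<Rightarrow> 'b"
    by auto
  have "(\<inter>) E ` (\<lambda>(i, B). f i -` B \<inter> \<Omega>) ` (I \<times> sets borel) = (\<inter>) E ` (\<lambda>(i, B). g i -` B \<inter> \<Omega>) ` (I \<times> sets borel)"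
    unfolding image_image using assms by (intro image_cong) auto
  then show ?thesis
    unfolding sets_restrict_space sets_gen_sigma generators by (rule trace_sigma_sets_eq)
qed

lemma restrict_space_join_sigma_cong:
  assumes "space G = \<Omega>" "space G' = \<Omega>" "space H = \<Omega>"
    and "sets (restrict_space G E) = sets (restrict_space G' E)"
  shows "sets (restrict_space (join_sigma \<Omega> G H) E) = sets (restrict_space (join_sigma \<Omega> G' H) E)"
proof -
  have "(\<inter>) E ` (sets G \<union> sets H) = (\<inter>) E ` (sets G' \<union> sets H)"
    using assms(4) by (simp add: sets_restrict_space image_Un)
  then show ?thesis
    unfolding sets_restrict_space sets_join_sigma[OF assms(1,3)] sets_join_sigma[OF assms(2,3)]
    by (rule trace_sigma_sets_eq)
qed

lemma measurable_If_trace: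
  assumes f: "f \<in> measurable G2 K" and g: "g \<in> measurable G1 K" and E: "E \<in> sets G1"
    and trace: "sets (restrict_space G1 E) = sets (restrict_space G2 E)"
  shows "(\<lambda>x. if x \<in> E then f x else g x) \<in> measurable G1 K"
proof -
  have "f \<in> measurable (restrict_space G1 E) K"
    using measurable_restrict_space1[OF f] by (subst measurable_cong_sets[OF trace refl])
  moreover have "g \<in> measurable (restrict_space G1 {x. x \<notin> E}) K"
    by (rule measurable_restrict_space1[OF g])
  moreover have "{x \<in> space G1. x \<in> E} \<in> sets G1"
    using E sets.sets_into_space[OF E] by (simp add: Int_absorb1 Collect_mem_eq Int_def[symmetric])
  ultimately show ?thesis
    by (subst measurable_If_restrict_space_iff) auto
qed

lemma right_continuous_eq_if_eq_on_Rats: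
  fixes f g :: "real \<Rightarrow> 'b::t2_space"
  assumes f: "(f \<longlongrightarrow> f t) (at_right t)" and g: "(g \<longlongrightarrow> g t) (at_right t)"
    and eq: "\<And>q. q \<in> \<rat> \<Longrightarrow> t < q \<Longrightarrow> f q = g q"
  shows "f t = g t"
proof (rule tendsto_unique)
  let ?F = "at t within ({t<..} \<inter> \<rat>)"
  have "t islimpt ({t<..} \<inter> \<rat>)"
    unfolding islimpt_approachable_real
  proof (intro allI impI)
    fix e :: real assume "0 < e"
    then obtain q where "q \<in> \<rat>" "t < q" "q < t + e"
      using Rats_dense_in_real[of t "t + e"] by auto
    then show "\<exists>s\<in>{t<..} \<inter> \<rat>. s \<noteq> t \<and> \<bar>s - t\<bar> < e"
      by (intro bexI[of _ q]) auto
  qed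
  then show "?F \<noteq> bot"
    using trivial_limit_within by blast
  show "(f \<longlongrightarrow> f t) ?F"
    using f by (rule tendsto_within_subset) auto
  have "(g \<longlongrightarrow> g t) ?F"
    using g by (rule tendsto_within_subset) auto
  moreover have "\<forall>\<^sub>F q in ?F. g q = f q"
    using eq by (auto simp: eventually_at_filter)
  ultimately show "(f \<longlongrightarrow> g t) ?F"
    by (rule Lim_transform_eventually)
qed

(* The witness makes r a path of R, hence right-continuous, so agreement on the rationals suffices. *)
lemma path_event_eq_Inter_Rats:
  assumes R: "\<And>\<omega> t. \<omega> \<in> \<Omega> \<Longrightarrow> 0 \<le> t \<Longrightarrow> ((\<lambda>s. R s \<omega>) \<longlongrightarrow> R t \<omega>) (at_right t)"
    and \<omega>0: "\<omega>0 \<in> path_event \<Omega> R r"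
  shows "path_event \<Omega> R r = (\<Inter>q\<in>\<rat> \<inter> {0..}. R q -` {r q} \<inter> \<Omega>)"
proof (intro equalityI subsetI)
  fix \<omega> assume "\<omega> \<in> path_event \<Omega> R r"
  then show "\<omega> \<in> (\<Inter>q\<in>\<rat> \<inter> {0..}. R q -` {r q} \<inter> \<Omega>)"
    unfolding path_event_def by (intro INT_I) auto
next
  fix \<omega> assume \<omega>: "\<omega> \<in> (\<Inter>q\<in>\<rat> \<inter> {0..}. R q -` {r q} \<inter> \<Omega>)"
  have "(0::real) \<in> \<rat> \<inter> {0..}" by simp
  from INT_D[OF \<omega> this] have "\<omega> \<in> \<Omega>" by simp
  have \<omega>0_path: "\<omega>0 \<in> \<Omega>" "\<And>t. 0 \<le> t \<Longrightarrow> R t \<omega>0 = r t"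
    using \<omega>0 by (auto simp: path_event_def)
  have "R t \<omega> = r t" if "0 \<le> t" for t
  proof -
    have "R q \<omega> = R q \<omega>0" if "q \<in> \<rat>" "t < q" for q
    proof -
      have "0 \<le> q" using \<open>0 \<le> t\<close> \<open>t < q\<close> by linarith
      with \<open>q \<in> \<rat>\<close> have "q \<in> \<rat> \<inter> {0..}" by simp
      from INT_D[OF \<omega> this] have "R q \<omega> = r q" by simp
      with \<omega>0_path(2)[OF \<open>0 \<le> q\<close>] show ?thesis by simp
    qed
    then have "R t \<omega> = R t \<omega>0"
      using right_continuous_eq_if_eq_on_Rats[where f = "\<lambda>s. R s \<omega>" and g = "\<lambda>s. R s \<omega>0" and t = t]
        R[OF \<open>\<omega> \<in> \<Omega>\<close> that] R[OF \<omega>0_path(1) that]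
      by blast
    then show ?thesis using \<omega>0_path(2)[OF that] by simp
  qed
  with \<open>\<omega> \<in> \<Omega>\<close> show "\<omega> \<in> path_event \<Omega> R r"
    by (simp add: path_event_def)
qed

lemma path_event_in_gen_sigma:
  assumes R: "\<And>\<omega> t. \<omega> \<in> \<Omega> \<Longrightarrow> 0 \<le> t \<Longrightarrow> ((\<lambda>s. R s \<omega>) \<longlongrightarrow> R t \<omega>) (at_right t)"
  shows "path_event \<Omega> R r \<in> sets (gen_sigma \<Omega> R {0..})"
proof (cases "path_event \<Omega> R r = {}")
  case False
  then obtain \<omega>0 where "\<omega>0 \<in> path_event \<Omega> R r"
    by blast
  have "R q -` {r q} \<inter> \<Omega> \<in> sets (gen_sigma \<Omega> R {0..})" if "q \<in> \<rat> \<inter> {0..}" for q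
  proof -
    have "R q \<in> borel_measurable (gen_sigma \<Omega> R {0..})"
      using that by (simp add: measurable_gen_sigma)
    from measurable_sets[OF this borel_closed[OF closed_singleton]] show ?thesis
      by simp
  qed
  then have "(\<lambda>q. R q -` {r q} \<inter> \<Omega>) ` (\<rat> \<inter> {0..}) \<subseteq> sets (gen_sigma \<Omega> R {0..})"
    by (rule image_subsetI)
  moreover have "(0::real) \<in> \<rat> \<inter> {0..}"
    by simp
  ultimately have "(\<Inter>q\<in>\<rat> \<inter> {0..}. R q -` {r q} \<inter> \<Omega>) \<in> sets (gen_sigma \<Omega> R {0..})"
    by (intro sets.countable_INT' countable_Int1[OF countable_rat]) auto
  then show ?thesis
    by (simp only: path_event_eq_Inter_Rats[OF R \<open>\<omega>0 \<in> path_event \<Omega> R r\<close>])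
qed simp

lemma path_event_trace_observed_sigma:
  fixes X :: "real \<Rightarrow> 'a \<Rightarrow> 'e::real_normed_vector" and R :: "real \<Rightarrow> 'a \<Rightarrow> real"
    and r :: "real \<Rightarrow> real"
  assumes R: "\<And>\<omega> t. \<omega> \<in> \<Omega> \<Longrightarrow> 0 \<le> t \<Longrightarrow> ((\<lambda>s. R s \<omega>) \<longlongrightarrow> R t \<omega>) (at_right t)"
  defines "E \<equiv> path_event \<Omega> R r"
    and "\<O> \<equiv> join_sigma \<Omega> (gen_sigma \<Omega> (\<lambda>t \<omega>. R t \<omega> *\<^sub>R X t \<omega>) {0..}) (gen_sigma \<Omega> R {0..})"
    and "XrR \<equiv> join_sigma \<Omega> (gen_sigma \<Omega> (\<lambda>t \<omega>. r t *\<^sub>R X t \<omega>) {0..}) (gen_sigma \<Omega> R {0..})"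
  shows "E \<in> sets \<O>" "E \<in> sets XrR" "sets (restrict_space \<O> E) = sets (restrict_space XrR E)"
proof -
  have "E \<in> sets (gen_sigma \<Omega> R {0..})"
    unfolding E_def using R by (rule path_event_in_gen_sigma)
  moreover have "sets (gen_sigma \<Omega> R {0..}) \<subseteq> sets \<O>" "sets (gen_sigma \<Omega> R {0..}) \<subseteq> sets XrR"
    unfolding \<O>_def XrR_def by (simp_all add: sets_join_sigma_upper)
  ultimately show "E \<in> sets \<O>" "E \<in> sets XrR"
    by blast+
  show "sets (restrict_space \<O> E) = sets (restrict_space XrR E)"
    unfolding \<O>_def XrR_def E_def
    by (intro restrict_space_join_sigma_cong restrict_space_gen_sigma_cong) (auto simp: path_event_def)
qed

lemma borel_measurable_LR:
  assumes "subalgebra M G"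
  shows "LR N M G \<in> borel_measurable G"
  unfolding LR_def using borel_measurable_RN_deriv[of "restr_to_subalg M G" "restr_to_subalg N G"]
  by (simp add: measurable_cong_sets[OF sets_restr_to_subalg[OF assms] refl])

locale abs_cont_finite_measures = M: finite_measure M + N: finite_measure N for M N :: "'a measure" +
  assumes sets_eq: "sets N = sets M"
    and abs_cont: "absolutely_continuous M N"
begin

lemma space_eq: "space N = space M"
  using sets_eq by (rule sets_eq_imp_space_eq)

lemma AE_N: "AE x in M. P x \<Longrightarrow> AE x in N. P x"
  by (rule absolutely_continuous_AE[OF sets_eq abs_cont])

lemma subalgebra_N: "subalgebra M G \<Longrightarrow> subalgebra N G"
  using sets_eq space_eq by (simp add: subalgebra_def)

lemma density_LR:
  assumes G: "subalgebra M G"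
  shows "density (restr_to_subalg M G) (\<lambda>x. ennreal (LR N M G x)) = restr_to_subalg N G"
proof -
  let ?M = "restr_to_subalg M G" and ?N = "restr_to_subalg N G"
  interpret MG: finite_measure ?M
    by (rule finite_measure_restr_to_subalg[OF G M.finite_measure_axioms])
  have NG: "finite_measure ?N"
    by (rule finite_measure_restr_to_subalg[OF subalgebra_N[OF G] N.finite_measure_axioms])
  have sets: "sets ?N = sets ?M"
    using sets_restr_to_subalg[OF G] sets_restr_to_subalg[OF subalgebra_N[OF G]] by simp
  have ac: "absolutely_continuous ?M ?N"
    using null_sets_restr_to_subalg[OF G] null_sets_restr_to_subalg[OF subalgebra_N[OF G]] abs_cont
    by (auto simp: absolutely_continuous_def)
  have "AE x in ?M. RN_deriv ?M ?N x \<noteq> \<infinity>"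
    using MG.RN_deriv_finite[OF finite_measure.sigma_finite_measure[OF NG] ac sets] .
  then have "density ?M (\<lambda>x. ennreal (LR N M G x)) = density ?M (RN_deriv ?M ?N)"
    by (intro density_cong) (auto simp: LR_def ennreal_enn2real_if)
  with MG.density_RN_deriv[OF ac sets] show ?thesis by simp
qed

lemma nn_integral_LR:
  fixes f :: "'a \<Rightarrow> ennreal"
  assumes G: "subalgebra M G" and f: "f \<in> borel_measurable G"
  shows "(\<integral>\<^sup>+x. f x \<partial>N) = (\<integral>\<^sup>+x. ennreal (LR N M G x) * f x \<partial>M)"
proof -
  have LR: "LR N M G \<in> borel_measurable G" by (rule borel_measurable_LR[OF G])
  have "(\<integral>\<^sup>+x. f x \<partial>N) = (\<integral>\<^sup>+x. f x \<partial>restr_to_subalg N G)"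
    by (rule nn_integral_subalgebra2[OF subalgebra_N[OF G] f, symmetric])
  also have "\<dots> = (\<integral>\<^sup>+x. ennreal (LR N M G x) * f x \<partial>restr_to_subalg M G)"
    unfolding density_LR[OF G, symmetric]
    by (rule nn_integral_density) (use LR f in \<open>auto simp: measurable_in_subalg[OF G]\<close>)
  also have "\<dots> = (\<integral>\<^sup>+x. ennreal (LR N M G x) * f x \<partial>M)"
    by (rule nn_integral_subalgebra2[OF G]) (use LR f in measurable)
  finally show ?thesis .
qed

lemma emeasure_LR:
  assumes "subalgebra M G" and "A \<in> sets G"
  shows "emeasure N A = (\<integral>\<^sup>+x. ennreal (LR N M G x) * indicator A x \<partial>M)"
proof -
  have "A \<in> sets N" using assms subalgebra_N by (auto simp: subalgebra_def)
  then have "emeasure N A = (\<integral>\<^sup>+x. indicator A x \<partial>N)" by simp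
  also have "\<dots> = (\<integral>\<^sup>+x. ennreal (LR N M G x) * indicator A x \<partial>M)"
    using nn_integral_LR[OF assms(1), of "indicator A"] assms(2) by simp
  finally show ?thesis .
qed

lemma integral_LR:
  fixes h :: "'a \<Rightarrow> real"
  assumes G: "subalgebra M G" and h: "h \<in> borel_measurable G"
  shows "(\<integral>x. h x \<partial>N) = (\<integral>x. LR N M G x * h x \<partial>M)"
proof -
  have LR: "LR N M G \<in> borel_measurable G" by (rule borel_measurable_LR[OF G])
  have "(\<integral>x. h x \<partial>N) = (\<integral>x. h x \<partial>restr_to_subalg N G)"
    by (rule integral_subalgebra2[OF subalgebra_N[OF G] h, symmetric])
  also have "\<dots> = (\<integral>x. LR N M G x * h x \<partial>restr_to_subalg M G)"
    unfolding density_LR[OF G, symmetric]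
    by (rule integral_real_density) (use LR h in \<open>auto simp: measurable_in_subalg[OF G] LR_def\<close>)
  also have "\<dots> = (\<integral>x. LR N M G x * h x \<partial>M)"
    by (rule integral_subalgebra2[OF G]) (use LR h in measurable)
  finally show ?thesis .
qed

lemma integrable_LR:
  assumes G: "subalgebra M G"
  shows "integrable M (LR N M G)"
proof (rule integrable_from_subalg[OF G])
  have LR: "LR N M G \<in> borel_measurable G" by (rule borel_measurable_LR[OF G])
  interpret NG: finite_measure "restr_to_subalg N G"
    by (rule finite_measure_restr_to_subalg[OF subalgebra_N[OF G] N.finite_measure_axioms])
  have "integrable (density (restr_to_subalg M G) (\<lambda>x. ennreal (LR N M G x))) (\<lambda>_. 1::real)"
    unfolding density_LR[OF G] by simp
  then show "integrable (restr_to_subalg M G) (LR N M G)"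
    by (subst (asm) integrable_real_density) (use LR in \<open>auto simp: measurable_in_subalg[OF G] LR_def\<close>)
qed

lemma LR_unique:
  fixes g :: "'a \<Rightarrow> real"
  assumes G: "subalgebra M G" and g: "g \<in> borel_measurable G" and nonneg: "\<And>x. 0 \<le> g x"
    and eq: "\<And>A. A \<in> sets G \<Longrightarrow> emeasure N A = (\<integral>\<^sup>+x. ennreal (g x) * indicator A x \<partial>M)"
  shows "AE x in M. g x = LR N M G x"
proof -
  let ?M = "restr_to_subalg M G"
  interpret MG: finite_measure ?M
    by (rule finite_measure_restr_to_subalg[OF G M.finite_measure_axioms])
  have gM: "(\<lambda>x. ennreal (g x)) \<in> borel_measurable ?M"
    using g by (simp add: measurable_in_subalg[OF G])
  have LRM: "(\<lambda>x. ennreal (LR N M G x)) \<in> borel_measurable ?M"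
    using borel_measurable_LR[OF G] by (simp add: measurable_in_subalg[OF G])
  have "density ?M (\<lambda>x. ennreal (g x)) = density ?M (\<lambda>x. ennreal (LR N M G x))"
  proof (rule measure_eqI)
    fix A assume "A \<in> sets (density ?M (\<lambda>x. ennreal (g x)))"
    then have A: "A \<in> sets G" by (simp add: sets_restr_to_subalg[OF G])
    have "emeasure (density ?M (\<lambda>x. ennreal (g x))) A = (\<integral>\<^sup>+x. ennreal (g x) * indicator A x \<partial>M)"
      using A g by (simp add: emeasure_density[OF gM] sets_restr_to_subalg[OF G] nn_integral_subalgebra2[OF G])
    also have "\<dots> = emeasure N A" by (rule eq[OF A, symmetric])
    also have "\<dots> = emeasure (density ?M (\<lambda>x. ennreal (LR N M G x))) A"
      using A by (simp add: density_LR[OF G] emeasure_restr_to_subalg[OF subalgebra_N[OF G]])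
    finally show "emeasure (density ?M (\<lambda>x. ennreal (g x))) A = emeasure (density ?M (\<lambda>x. ennreal (LR N M G x))) A" .
  qed simp
  then have "AE x in ?M. ennreal (g x) = ennreal (LR N M G x)"
    using MG.density_unique_iff[OF gM LRM] by simp
  then have "AE x in M. ennreal (g x) = ennreal (LR N M G x)"
    by (rule AE_restr_to_subalg[OF G])
  then show ?thesis
    by eventually_elim (simp add: nonneg LR_def)
qed

lemma LR_pos:
  assumes G: "subalgebra M G" and ac: "absolutely_continuous N M"
  shows "AE x in M. 0 < LR N M G x"
proof -
  define Z where "Z = {x \<in> space M. LR N M G x = 0}"
  have "Z = {x \<in> space G. LR N M G x = 0}"
    using G by (simp add: Z_def subalgebra_def)
  also have "\<dots> \<in> sets G"
    using borel_measurable_LR[OF G] by measurable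
  finally have Z: "Z \<in> sets G" .
  have "emeasure N Z = (\<integral>\<^sup>+x. ennreal (LR N M G x) * indicator Z x \<partial>M)"
    by (rule emeasure_LR[OF G Z])
  also have "\<dots> = 0"
    by (rule nn_integral_zero') (auto simp: Z_def indicator_def)
  finally have "Z \<in> null_sets N"
    using Z G sets_eq by (auto simp: subalgebra_def)
  then have "Z \<in> null_sets M"
    using ac by (auto simp: absolutely_continuous_def)
  then have "AE x in M. x \<notin> Z"
    by (rule AE_not_in)
  with AE_space show ?thesis
    by eventually_elim (auto simp: Z_def LR_def order_less_le)
qed

lemma LR_eq_on_trace:
  assumes G1: "subalgebra M G1" and G2: "subalgebra M G2"
    and E: "E \<in> sets G1" "E \<in> sets G2"
    and trace: "sets (restrict_space G1 E) = sets (restrict_space G2 E)"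
  shows "AE x in M. x \<in> E \<longrightarrow> LR N M G1 x = LR N M G2 x"
proof -
  define g where "g x = (if x \<in> E then LR N M G2 x else LR N M G1 x)" for x
  have g: "g \<in> borel_measurable G1"
    unfolding g_def using borel_measurable_LR[OF G2] borel_measurable_LR[OF G1] E(1) trace
    by (rule measurable_If_trace)
  have "AE x in M. g x = LR N M G1 x"
  proof (rule LR_unique[OF G1 g])
    show "0 \<le> g x" for x by (simp add: g_def LR_def)
    fix A assume A: "A \<in> sets G1"
    then have "E \<inter> A \<in> sets (restrict_space G1 E)"
      unfolding sets_restrict_space by (rule imageI)
    then have "E \<inter> A \<in> sets (restrict_space G2 E)"
      by (simp only: trace)
    then obtain B where B: "E \<inter> A = E \<inter> B" "B \<in> sets G2"
      unfolding sets_restrict_space by (rule imageE)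
    have in_N: "E \<inter> A \<in> sets N" "A - E \<in> sets N"
      using A E(1) subalgebra_N[OF G1] by (auto simp: subalgebra_def)
    have "emeasure N A = emeasure N ((E \<inter> A) \<union> (A - E))"
      by (rule arg_cong[where f = "emeasure N"]) blast
    also have "\<dots> = emeasure N (E \<inter> A) + emeasure N (A - E)"
      by (rule plus_emeasure[OF in_N, symmetric]) blast
    also have "emeasure N (E \<inter> A) = (\<integral>\<^sup>+x. ennreal (LR N M G2 x) * indicator (E \<inter> A) x \<partial>M)"
      unfolding B(1) by (rule emeasure_LR[OF G2]) (use B(2) E(2) in auto)
    also have "emeasure N (A - E) = (\<integral>\<^sup>+x. ennreal (LR N M G1 x) * indicator (A - E) x \<partial>M)"
      by (rule emeasure_LR[OF G1]) (use A E(1) in auto)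
    also have "(\<integral>\<^sup>+x. ennreal (LR N M G2 x) * indicator (E \<inter> A) x \<partial>M) + (\<integral>\<^sup>+x. ennreal (LR N M G1 x) * indicator (A - E) x \<partial>M)
        = (\<integral>\<^sup>+x. ennreal (LR N M G2 x) * indicator (E \<inter> A) x + ennreal (LR N M G1 x) * indicator (A - E) x \<partial>M)"
      using measurable_from_subalg[OF G1 borel_measurable_LR[OF G1]] measurable_from_subalg[OF G2 borel_measurable_LR[OF G2]]
        in_N sets_eq
      by (intro nn_integral_add[symmetric]) auto
    also have "\<dots> = (\<integral>\<^sup>+x. ennreal (g x) * indicator A x \<partial>M)"
      by (rule nn_integral_cong) (auto simp: g_def indicator_def)
    finally show "emeasure N A = (\<integral>\<^sup>+x. ennreal (g x) * indicator A x \<partial>M)" .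
  qed
  then show ?thesis
    by eventually_elim (auto simp: g_def)
qed

lemma measure_Int_eq_LR_if_cond_exp_eq:
  assumes G: "subalgebra M G" and a: "a \<in> sets M" and c: "c \<in> sets G"
    and cond: "AE x in M. real_cond_exp N G (indicator a) x = real_cond_exp M G (indicator a) x"
  shows "measure N (a \<inter> c) = (\<integral>x. LR N M G x * indicator (a \<inter> c) x \<partial>M)"
proof -
  interpret NG: finite_measure_subalgebra N G
    by unfold_locales (rule subalgebra_N[OF G])
  interpret MG: finite_measure_subalgebra M G
    by unfold_locales (rule G)
  let ?eN = "real_cond_exp N G (indicator a)" and ?eM = "real_cond_exp M G (indicator a)"
  have [measurable]: "c \<in> sets G" "a \<in> sets M" "a \<in> sets N" "LR N M G \<in> borel_measurable G"
    using c a sets_eq borel_measurable_LR[OF G] by auto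
  have [measurable]: "?eM \<in> borel_measurable N"
    by (rule measurable_from_subalg[OF subalgebra_N[OF G] borel_measurable_cond_exp])
  have c_M: "c \<in> sets M" "c \<in> sets N"
    using c G sets_eq by (auto simp: subalgebra_def)
  have "measure N (a \<inter> c) = (\<integral>x. indicator c x * indicator a x \<partial>N)"
    using c_M by (simp add: indicator_inter_arith[symmetric] Int_commute)
  also have "\<dots> = (\<integral>x. indicator c x * ?eN x \<partial>N)"
    using c_M by (intro NG.real_cond_exp_intg(2)[symmetric])
      (auto simp: indicator_inter_arith[symmetric] less_top[symmetric] N.emeasure_finite)
  also have "\<dots> = (\<integral>x. indicator c x * ?eM x \<partial>N)"
    by (intro integral_cong_AE) (use AE_N[OF cond] c_M in \<open>auto elim: eventually_mono\<close>)
  also have "\<dots> = (\<integral>x. LR N M G x * (indicator c x * ?eM x) \<partial>M)"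
    by (rule integral_LR[OF G]) measurable
  also have "\<dots> = (\<integral>x. (LR N M G x * indicator c x) * indicator a x \<partial>M)"
    unfolding mult.assoc[symmetric]
    by (rule MG.real_cond_exp_intg(2))
      (use c_M integrable_LR[OF G] in \<open>auto intro: integrable_real_mult_indicator\<close>)
  also have "\<dots> = (\<integral>x. LR N M G x * indicator (a \<inter> c) x \<partial>M)"
    by (rule Bochner_Integration.integral_cong) (auto simp: indicator_def)
  finally show ?thesis .
qed

lemma emeasure_join_sigma_eq_LR_if_cond_exp_eq:
  assumes G: "subalgebra M G" and H: "subalgebra M H"
    and cond: "\<And>A. A \<in> sets H \<Longrightarrow>
      AE x in M. real_cond_exp N G (indicator A) x = real_cond_exp M G (indicator A) x"
    and A: "A \<in> sets (join_sigma (space M) G H)"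
  shows "emeasure N A = (\<integral>\<^sup>+x. ennreal (LR N M G x) * indicator A x \<partial>M)"
proof -
  let ?K = "density M (\<lambda>x. ennreal (LR N M G x))"
  have LR_M: "LR N M G \<in> borel_measurable M"
    by (rule measurable_from_subalg[OF G borel_measurable_LR[OF G]])
  have "emeasure N A = emeasure ?K A"
  proof (rule emeasure_join_sigma_eqI[OF N.finite_measure_axioms subalgebra_N[OF G] subalgebra_N[OF H]])
    show "sets ?K = sets N" and "A \<in> sets (join_sigma (space N) G H)"
      using sets_eq space_eq A by simp_all
    fix c a assume c: "c \<in> sets G" and a: "a \<in> sets H"
    then have ca: "c \<inter> a \<in> sets M" "a \<in> sets M"
      using G H by (auto simp: subalgebra_def)
    have "emeasure N (c \<inter> a) = ennreal (measure N (a \<inter> c))"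
      using ca sets_eq by (simp add: N.emeasure_eq_measure Int_commute)
    also have "measure N (a \<inter> c) = (\<integral>x. LR N M G x * indicator (c \<inter> a) x \<partial>M)"
      using measure_Int_eq_LR_if_cond_exp_eq[OF G ca(2) c cond[OF a]] by (simp add: Int_commute)
    also have "ennreal \<dots> = (\<integral>\<^sup>+x. ennreal (LR N M G x * indicator (c \<inter> a) x) \<partial>M)"
      using integrable_real_mult_indicator[OF ca(1) integrable_LR[OF G]]
      by (intro nn_integral_eq_integral[symmetric]) (auto simp: LR_def)
    also have "\<dots> = (\<integral>\<^sup>+x. ennreal (LR N M G x) * indicator (c \<inter> a) x \<partial>M)"
      by (intro nn_integral_cong) (simp add: indicator_def)
    also have "\<dots> = emeasure ?K (c \<inter> a)"
      using LR_M ca(1) by (intro emeasure_density[symmetric]) auto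
    finally show "emeasure N (c \<inter> a) = emeasure ?K (c \<inter> a)" .
  qed
  also have "\<dots> = (\<integral>\<^sup>+x. ennreal (LR N M G x) * indicator A x \<partial>M)"
    using LR_M A subalgebra_join_sigma[OF G H] by (intro emeasure_density) (auto simp: subalgebra_def)
  finally show ?thesis .
qed

lemma LR_join_sigma_eq_if_cond_exp_eq:
  assumes G: "subalgebra M G" and H: "subalgebra M H"
    and cond: "\<And>A. A \<in> sets H \<Longrightarrow>
      AE x in M. real_cond_exp N G (indicator A) x = real_cond_exp M G (indicator A) x"
  shows "AE x in M. LR N M (join_sigma (space M) G H) x = LR N M G x"
proof -
  have "subalgebra M (join_sigma (space M) G H)"
    by (rule subalgebra_join_sigma[OF G H])
  moreover have "sets G \<subseteq> sets (join_sigma (space M) G H)"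
    using G H by (intro sets_join_sigma_upper(1)) (auto simp: subalgebra_def)
  then have "subalgebra (join_sigma (space M) G H) G"
    using G H by (auto simp: subalgebra_def)
  then have "LR N M G \<in> borel_measurable (join_sigma (space M) G H)"
    by (rule measurable_from_subalg) (rule borel_measurable_LR[OF G])
  ultimately have "AE x in M. LR N M G x = LR N M (join_sigma (space M) G H) x"
  proof (rule LR_unique)
    show "0 \<le> LR N M G x" for x
      by (simp add: LR_def)
    show "emeasure N A = (\<integral>\<^sup>+x. ennreal (LR N M G x) * indicator A x \<partial>M)"
      if "A \<in> sets (join_sigma (space M) G H)" for A
      by (rule emeasure_join_sigma_eq_LR_if_cond_exp_eq[OF G H cond that])
  qed
  then show ?thesis
    by (simp add: eq_commute)
qed

end

lemma abs_cont_finite_measures_trans: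
  assumes "abs_cont_finite_measures L M" and "abs_cont_finite_measures M N"
  shows "abs_cont_finite_measures L N"
proof -
  interpret LM: abs_cont_finite_measures L M by fact
  interpret MN: abs_cont_finite_measures M N by fact
  have "sets N = sets L"
    using LM.sets_eq MN.sets_eq by simp
  moreover have "absolutely_continuous L N"
    using LM.abs_cont MN.abs_cont by (auto simp: absolutely_continuous_def)
  ultimately show ?thesis
    by (intro abs_cont_finite_measures.intro abs_cont_finite_measures_axioms.intro
        LM.M.finite_measure_axioms MN.N.finite_measure_axioms)
qed

lemma LR_chain:
  assumes QQ0: "abs_cont_finite_measures Q0 Q" and Q0P: "abs_cont_finite_measures P Q0"
    and G: "subalgebra P G"
  shows "AE x in P. LR Q P G x = LR Q Q0 G x * LR Q0 P G x"
proof -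
  interpret QQ0: abs_cont_finite_measures Q0 Q by (rule QQ0)
  interpret Q0P: abs_cont_finite_measures P Q0 by (rule Q0P)
  interpret QP: abs_cont_finite_measures P Q by (rule abs_cont_finite_measures_trans[OF Q0P QQ0])
  have G0: "subalgebra Q0 G" by (rule Q0P.subalgebra_N[OF G])
  have [measurable]: "LR Q Q0 G \<in> borel_measurable G" "LR Q0 P G \<in> borel_measurable G"
    by (rule borel_measurable_LR[OF G0], rule borel_measurable_LR[OF G])
  have "AE x in P. LR Q Q0 G x * LR Q0 P G x = LR Q P G x"
  proof (rule QP.LR_unique[OF G])
    show "0 \<le> LR Q Q0 G x * LR Q0 P G x" for x by (simp add: LR_def)
    fix A assume A[measurable]: "A \<in> sets G"
    have "emeasure Q A = (\<integral>\<^sup>+x. ennreal (LR Q Q0 G x) * indicator A x \<partial>Q0)"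
      by (rule QQ0.emeasure_LR[OF G0 A])
    also have "\<dots> = (\<integral>\<^sup>+x. ennreal (LR Q0 P G x) * (ennreal (LR Q Q0 G x) * indicator A x) \<partial>P)"
      by (rule Q0P.nn_integral_LR[OF G]) measurable
    also have "\<dots> = (\<integral>\<^sup>+x. ennreal (LR Q Q0 G x * LR Q0 P G x) * indicator A x \<partial>P)"
      by (simp add: ennreal_mult LR_def mult_ac)
    finally show "emeasure Q A = (\<integral>\<^sup>+x. ennreal (LR Q Q0 G x * LR Q0 P G x) * indicator A x \<partial>P)" .
  qed measurable
  then show ?thesis
    by (simp add: eq_commute)
qed

lemma condLR_chain:
  assumes "abs_cont_finite_measures Q0 Q" and "abs_cont_finite_measures P Q0"
    and G: "subalgebra P G" and H: "subalgebra P H"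
  shows "AE x in P. condLR (space P) Q P H G x = condLR (space P) Q Q0 H G x * condLR (space P) Q0 P H G x"
  using LR_chain[OF assms(1,2) G] LR_chain[OF assms(1,2) subalgebra_join_sigma[OF G H]]
  by eventually_elim (simp add: condLR_def)

lemma LR_join_sigma_eq_if_CAR:
  assumes QQ0: "abs_cont_finite_measures Q0 Q" "absolutely_continuous Q Q0"
    and Q0P: "abs_cont_finite_measures P Q0" "absolutely_continuous Q0 P"
    and G1: "subalgebra P G1" and G2: "subalgebra P G2" and H: "subalgebra P H"
    and noninf: "AE x in Q0. LR Q Q0 (join_sigma (space P) G1 H) x = LR Q Q0 G1 x"
    and CAR_Q: "AE x in P. x \<in> E \<longrightarrow> condLR (space P) Q P H G1 x = condLR (space P) Q P H G2 x"
    and CAR_Q0: "AE x in P. x \<in> E \<longrightarrow> condLR (space P) Q0 P H G1 x = condLR (space P) Q0 P H G2 x"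
  shows "AE x in Q0. x \<in> E \<longrightarrow> LR Q Q0 (join_sigma (space P) G2 H) x = LR Q Q0 G2 x"
proof -
  interpret QQ0: abs_cont_finite_measures Q0 Q by (rule QQ0(1))
  interpret Q0P: abs_cont_finite_measures P Q0 by (rule Q0P(1))
  have "AE x in Q0. 0 < LR Q Q0 G1 x"
    by (rule QQ0.LR_pos[OF Q0P.subalgebra_N[OF G1] QQ0(2)])
  then have pos1: "AE x in P. 0 < LR Q Q0 G1 x"
    by (rule absolutely_continuous_AE[OF Q0P.sets_eq[symmetric] Q0P(2)])
  have pos2: "AE x in P. 0 < LR Q0 P G2 x" "AE x in P. 0 < LR Q0 P (join_sigma (space P) G2 H) x"
    by (rule Q0P.LR_pos[OF G2 Q0P(2)], rule Q0P.LR_pos[OF subalgebra_join_sigma[OF G2 H] Q0P(2)])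
  have noninf_P: "AE x in P. LR Q Q0 (join_sigma (space P) G1 H) x = LR Q Q0 G1 x"
    by (rule absolutely_continuous_AE[OF Q0P.sets_eq[symmetric] Q0P(2) noninf])
  have "AE x in P. x \<in> E \<longrightarrow> LR Q Q0 (join_sigma (space P) G2 H) x = LR Q Q0 G2 x"
    using condLR_chain[OF QQ0(1) Q0P(1) G1 H] condLR_chain[OF QQ0(1) Q0P(1) G2 H]
      CAR_Q CAR_Q0 noninf_P pos1 pos2
  proof eventually_elim
    case (elim x)
    \<comment> \<open>The chain rule gives condLR Q P = condLR Q Q0 * condLR Q0 P; the G1-factor condLR Q Q0 is 1
      by non-informativeness and CAR equates the remaining factors, so condLR Q Q0 H G2 = 1.\<close>
    let ?c = "\<lambda>N M G. condLR (space P) N M H G x"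
    show ?case
    proof
      assume "x \<in> E"
      have "?c Q Q0 G1 = 1" and c_nz: "?c Q0 P G2 \<noteq> 0"
        using elim by (simp_all add: condLR_def)
      then have "?c Q Q0 G2 * ?c Q0 P G2 = ?c Q0 P G2"
        using elim \<open>x \<in> E\<close> by simp
      then have "?c Q Q0 G2 = 1"
        using c_nz by simp
      then show "LR Q Q0 (join_sigma (space P) G2 H) x = LR Q Q0 G2 x"
        by (simp add: condLR_def)
    qed
  qed
  then show ?thesis
    by (rule Q0P.AE_N)
qed

lemma subalgebras_of_coarsening:
  fixes X :: "real \<Rightarrow> 'a \<Rightarrow> 'e::euclidean_space" and R :: "real \<Rightarrow> 'a \<Rightarrow> real"
    and r :: "real \<Rightarrow> real"
  assumes space: "space M = \<Omega>"
    and sets: "sets M = sets (join_sigma \<Omega> (gen_sigma \<Omega> X I) (gen_sigma \<Omega> R I))"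
  shows "subalgebra M (gen_sigma \<Omega> X I)" "subalgebra M (gen_sigma \<Omega> R I)"
    "subalgebra M (gen_sigma \<Omega> (\<lambda>t \<omega>. r t *\<^sub>R X t \<omega>) I)"
    "subalgebra M (join_sigma \<Omega> (gen_sigma \<Omega> (\<lambda>t \<omega>. R t \<omega> *\<^sub>R X t \<omega>) I) (gen_sigma \<Omega> R I))"
    "subalgebra M (join_sigma \<Omega> (gen_sigma \<Omega> (\<lambda>t \<omega>. r t *\<^sub>R X t \<omega>) I) (gen_sigma \<Omega> R I))"
proof -
  have "sets (gen_sigma \<Omega> X I) \<subseteq> sets M" "sets (gen_sigma \<Omega> R I) \<subseteq> sets M"
    unfolding sets by (simp_all add: sets_join_sigma_upper)
  then show X: "subalgebra M (gen_sigma \<Omega> X I)" and R: "subalgebra M (gen_sigma \<Omega> R I)"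
    using space by (simp_all add: subalgebra_def)
  have "X t \<in> borel_measurable M" "R t \<in> borel_measurable M" if "t \<in> I" for t
    using measurable_from_subalg[OF X measurable_gen_sigma[OF that]]
      measurable_from_subalg[OF R measurable_gen_sigma[OF that]] by simp_all
  then have Xr: "subalgebra M (gen_sigma \<Omega> (\<lambda>t \<omega>. r t *\<^sub>R X t \<omega>) I)"
    and RX: "subalgebra M (gen_sigma \<Omega> (\<lambda>t \<omega>. R t \<omega> *\<^sub>R X t \<omega>) I)"
    by (auto intro!: subalgebra_gen_sigma[OF space] borel_measurable_scaleR)
  then show "subalgebra M (gen_sigma \<Omega> (\<lambda>t \<omega>. r t *\<^sub>R X t \<omega>) I)" by simp
  show "subalgebra M (join_sigma \<Omega> (gen_sigma \<Omega> (\<lambda>t \<omega>. R t \<omega> *\<^sub>R X t \<omega>) I) (gen_sigma \<Omega> R I))"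
    using subalgebra_join_sigma[OF RX R] space by simp
  show "subalgebra M (join_sigma \<Omega> (gen_sigma \<Omega> (\<lambda>t \<omega>. r t *\<^sub>R X t \<omega>) I) (gen_sigma \<Omega> R I))"
    using subalgebra_join_sigma[OF Xr R] space by simp
qed

theorem theorem4:
  fixes \<Omega> :: "'a set"
    and X :: "real \<Rightarrow> 'a \<Rightarrow> 'e::euclidean_space"
    and R :: "real \<Rightarrow> 'a \<Rightarrow> real"
    and P :: "'th \<Rightarrow> 'ps \<Rightarrow> 'a measure"
    and \<theta>0 :: 'th and \<psi>0 :: 'ps
    and r :: "real \<Rightarrow> real"
  defines "\<X> \<equiv> gen_sigma \<Omega> X {0..}"
    and "\<R> \<equiv> gen_sigma \<Omega> R {0..}"
    and "\<O> \<equiv> join_sigma \<Omega> (gen_sigma \<Omega> (\<lambda>t \<omega>. R t \<omega> *\<^sub>R X t \<omega>) {0..}) (gen_sigma \<Omega> R {0..})"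
    and "\<X>r \<equiv> gen_sigma \<Omega> (\<lambda>t \<omega>. r t *\<^sub>R X t \<omega>) {0..}"
  assumes R_01: "\<And>t \<omega>. t \<ge> 0 \<Longrightarrow> \<omega> \<in> \<Omega> \<Longrightarrow> R t \<omega> \<in> {0, 1}"
    and X_cadlag: "\<And>\<omega>. \<omega> \<in> \<Omega> \<Longrightarrow> cadlag (\<lambda>t. X t \<omega>)"
    and R_cadlag: "\<And>\<omega>. \<omega> \<in> \<Omega> \<Longrightarrow> cadlag (\<lambda>t. R t \<omega>)"
    and prob: "\<And>\<theta> \<psi>. prob_space (P \<theta> \<psi>)"
    and space_P: "\<And>\<theta> \<psi>. space (P \<theta> \<psi>) = \<Omega>"
    and sets_P: "\<And>\<theta> \<psi>. sets (P \<theta> \<psi>) = sets (join_sigma \<Omega> \<X> \<R>)"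
    and equiv: "\<And>\<theta> \<psi> \<theta>' \<psi>'. null_sets (P \<theta> \<psi>) = null_sets (P \<theta>' \<psi>')"
    and X_law: "\<And>\<theta> \<psi> \<psi>' A. A \<in> sets \<X> \<Longrightarrow> emeasure (P \<theta> \<psi>) A = emeasure (P \<theta> \<psi>') A"
    and noninf: "\<And>\<theta>1 \<theta>2 \<psi> A. A \<in> sets \<R> \<Longrightarrow>
        AE \<omega> in P \<theta>0 \<psi>0. real_cond_exp (P \<theta>1 \<psi>) \<X> (indicator A) \<omega>
                         = real_cond_exp (P \<theta>2 \<psi>) \<X> (indicator A) \<omega>"
    and r_pos: "measure (P \<theta>0 \<psi>0) (path_event \<Omega> R r) > 0"
    and CAR: "\<And>\<theta> \<psi>. AE \<omega> in P \<theta>0 \<psi>0. \<omega> \<in> path_event \<Omega> R r \<longrightarrow>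
        condLR \<Omega> (P \<theta> \<psi>) (P \<theta>0 \<psi>0) \<R> \<X> \<omega> = condLR \<Omega> (P \<theta> \<psi>) (P \<theta>0 \<psi>0) \<R> \<X>r \<omega>"
  shows "\<forall>\<theta> \<psi>'. AE \<omega> in P \<theta>0 \<psi>'. \<omega> \<in> path_event \<Omega> R r \<longrightarrow>
        LR (P \<theta> \<psi>') (P \<theta>0 \<psi>') \<O> \<omega> = LR (P \<theta> \<psi>') (P \<theta>0 \<psi>') \<X>r \<omega>"
proof (intro allI)
  fix \<theta> \<psi>'
  let ?Q = "P \<theta> \<psi>'"
  let ?Qref = "P \<theta>0 \<psi>'"
  have ac: "absolutely_continuous (P a b) (P c d)" "abs_cont_finite_measures (P a b) (P c d)" for a b c d
    using prob[THEN prob_space.finite_measure] sets_P equiv[of a b c d]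
    by (simp_all add: abs_cont_finite_measures_def abs_cont_finite_measures_axioms_def absolutely_continuous_def)
  have sub: "subalgebra (P a b) \<X>" "subalgebra (P a b) \<R>" "subalgebra (P a b) \<X>r"
    "subalgebra (P a b) \<O>" "subalgebra (P a b) (join_sigma \<Omega> \<X>r \<R>)" for a b
    using subalgebras_of_coarsening[OF space_P sets_P[unfolded \<X>_def \<R>_def]]
    unfolding \<X>_def \<R>_def \<X>r_def \<O>_def by blast+
  have right_cont: "\<And>\<omega> t. \<omega> \<in> \<Omega> \<Longrightarrow> 0 \<le> t \<Longrightarrow> ((\<lambda>s. R s \<omega>) \<longlongrightarrow> R t \<omega>) (at_right t)"
    using R_cadlag by (simp add: cadlag_def)
  note trace = path_event_trace_observed_sigma[where \<Omega> = \<Omega> and R = R and X = X and r = r, OF right_cont,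
      folded \<O>_def, folded \<R>_def \<X>r_def]
  interpret abs_cont_finite_measures ?Qref ?Q by (rule ac)
  have "AE x in ?Qref. x \<in> path_event \<Omega> R r \<longrightarrow> LR ?Q ?Qref \<O> x = LR ?Q ?Qref (join_sigma \<Omega> \<X>r \<R>) x"
    by (rule LR_eq_on_trace[OF sub(4,5) trace])
  moreover have "AE x in ?Qref. LR ?Q ?Qref (join_sigma \<Omega> \<X> \<R>) x = LR ?Q ?Qref \<X> x"
  proof -
    have "AE x in ?Qref. real_cond_exp ?Q \<X> (indicator A) x = real_cond_exp ?Qref \<X> (indicator A) x"
      if "A \<in> sets \<R>" for A
      by (rule absolutely_continuous_AE[OF _ ac(1) noninf[OF that]]) (simp add: sets_P)
    then show ?thesis
      using LR_join_sigma_eq_if_cond_exp_eq[OF sub(1,2)] space_P by simp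
  qed
  then have "AE x in ?Qref. x \<in> path_event \<Omega> R r \<longrightarrow> LR ?Q ?Qref (join_sigma \<Omega> \<X>r \<R>) x = LR ?Q ?Qref \<X>r x"
    by (rule LR_join_sigma_eq_if_CAR[OF ac(2,1,2,1) sub(1,3,2), unfolded space_P, OF _ CAR CAR])
  ultimately show "AE x in ?Qref. x \<in> path_event \<Omega> R r \<longrightarrow> LR ?Q ?Qref \<O> x = LR ?Q ?Qref \<X>r x"
    by eventually_elim auto
qed

end
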